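(* Let $(E,\|\cdot\|_E)$ be a quasi-normed symmetric sequence space with $E\subseteq c_0$ (and whose dual $E^*$ separates the points of $E$). Then $(E,\|\cdot\|_{\widehat{E}})$ is a normed symmetric sequence space; that is, $\|\cdot\|_{\widehat E}$ is a norm on $E$ and whenever $f\in L_0(\mathbb{N})$, $g\in E$ and $\mu(f)\le\mu(g)$, then $f\in E$ and $\|f\|_{\widehat{E}}\le\|g\|_{\widehat{E}}$.
   Context: A quasi-norm on a complex vector space $X$ is a map $\|\cdot\|_X:X\to\mathbb R$ with $\|x\|_X>0$ for $x\ne0$, $\|\alpha x\|_X=|\alpha|\|x\|_X$, and $\|x+y\|_X\le C(\|x\|_X+\|y\|_X)$ for some constant $C$. The envelope seminorm is $\|x\|_{\widehat{X}}=\inf\{\sum_{i=1}^n\|x_i\|_X: x=\sum_{i=1}^n x_i,\ x_i\in X,\ n\in\mathbb N\}$ (equivalently the Minkowski functional of the convex hull of the unit ball of $X$); it is a norm when $X^*$ separates points, and the Banach envelope $\widehat X$ is the completion of $(X,\|\cdot\|_{\widehat X})$. $L_0(\mathbb N)$ is the space of complex sequences with counting measure $m$; the decreasing rearrangement is $\mu(t,f)=\inf\{s\ge 0: m\{k:|f(k)|>s\}\le t\}$, identified with the sequence $(\mu(n-1,f))_{n\ge1}$. A quasi-normed symmetric sequence space is a quasi-normed space $E\subseteq L_0(\mathbb N)$ such that whenever $f\in L_0(\mathbb N)$, $g\in E$ and $\mu(f)\le\mu(g)$, then $f\in E$ and $\|f\|_E\le\|g\|_E$. *)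

theory Defs
  imports "HOL-Analysis.Analysis" "HOL-Library.Extended_Real" "HOL-Library.Function_Algebras"
begin

text \<open>Sequences in L_0(N) are functions nat => complex (counting measure on N).\<close>

text \<open>Decreasing rearrangement mu(t,f) = inf{s >= 0 : m{k : |f k| > s} <= t}, evaluated at
  integer t = n (the sequence (mu(n-1,f))_{n>=1}, shifted to start at index 0).
  Values are extended reals: the infimum of the empty set is +infinity.
  A set of infinite counting measure is never <= t.\<close>
definition decr_rearr :: "(nat \<Rightarrow> complex) \<Rightarrow> nat \<Rightarrow> ereal" where
  "decr_rearr f n = Inf {ereal s | s. s \<ge> 0 \<and> finite {k. norm (f k) > s}
                                      \<and> card {k. norm (f k) > s} \<le> n}"

definition complex_subspace :: "(nat \<Rightarrow> complex) set \<Rightarrow> bool" where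
  "complex_subspace E \<longleftrightarrow> 0 \<in> E \<and> (\<forall>x\<in>E. \<forall>y\<in>E. x + y \<in> E)
      \<and> (\<forall>a::complex. \<forall>x\<in>E. (\<lambda>k. a * x k) \<in> E)"

definition is_quasinorm :: "(nat \<Rightarrow> complex) set \<Rightarrow> ((nat \<Rightarrow> complex) \<Rightarrow> real) \<Rightarrow> bool" where
  "is_quasinorm E N \<longleftrightarrow> complex_subspace E
      \<and> (\<forall>x\<in>E. x \<noteq> 0 \<longrightarrow> N x > 0)
      \<and> (\<forall>a::complex. \<forall>x\<in>E. N (\<lambda>k. a * x k) = norm a * N x)
      \<and> (\<exists>C. \<forall>x\<in>E. \<forall>y\<in>E. N (x + y) \<le> C * (N x + N y))"

definition is_norm_on :: "(nat \<Rightarrow> complex) set \<Rightarrow> ((nat \<Rightarrow> complex) \<Rightarrow> real) \<Rightarrow> bool" where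
  "is_norm_on E N \<longleftrightarrow> complex_subspace E
      \<and> (\<forall>x\<in>E. x \<noteq> 0 \<longrightarrow> N x > 0)
      \<and> (\<forall>a::complex. \<forall>x\<in>E. N (\<lambda>k. a * x k) = norm a * N x)
      \<and> (\<forall>x\<in>E. \<forall>y\<in>E. N (x + y) \<le> N x + N y)"

definition is_symmetric :: "(nat \<Rightarrow> complex) set \<Rightarrow> ((nat \<Rightarrow> complex) \<Rightarrow> real) \<Rightarrow> bool" where
  "is_symmetric E N \<longleftrightarrow> (\<forall>f g. g \<in> E \<and> (\<forall>n. decr_rearr f n \<le> decr_rearr g n)
                           \<longrightarrow> f \<in> E \<and> N f \<le> N g)"

definition dual_functional :: "(nat \<Rightarrow> complex) set \<Rightarrow> ((nat \<Rightarrow> complex) \<Rightarrow> real)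
     \<Rightarrow> ((nat \<Rightarrow> complex) \<Rightarrow> complex) \<Rightarrow> bool" where
  "dual_functional E N \<phi> \<longleftrightarrow>
      (\<forall>x\<in>E. \<forall>y\<in>E. \<phi> (x + y) = \<phi> x + \<phi> y)
    \<and> (\<forall>a::complex. \<forall>x\<in>E. \<phi> (\<lambda>k. a * x k) = a * \<phi> x)
    \<and> (\<exists>C. \<forall>x\<in>E. norm (\<phi> x) \<le> C * N x)"

definition dual_separates :: "(nat \<Rightarrow> complex) set \<Rightarrow> ((nat \<Rightarrow> complex) \<Rightarrow> real) \<Rightarrow> bool" where
  "dual_separates E N \<longleftrightarrow> (\<forall>x\<in>E. x \<noteq> 0 \<longrightarrow> (\<exists>\<phi>. dual_functional E N \<phi> \<and> \<phi> x \<noteq> 0))"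

definition envelope_norm :: "(nat \<Rightarrow> complex) set \<Rightarrow> ((nat \<Rightarrow> complex) \<Rightarrow> real)
     \<Rightarrow> (nat \<Rightarrow> complex) \<Rightarrow> real" where
  "envelope_norm E N x = Inf {(\<Sum>i<n. N (xs i)) | n xs.
       (n::nat) \<ge> 1 \<and> (\<forall>i<n. xs i \<in> E) \<and> x = (\<Sum>i<n. xs i)}"

end

theory Submission
  imports Defs
begin

text \<open>
  Homogeneity of the envelope norm and its triangle inequality come from scaling and concatenating
  decompositions \<open>x = \<Sum>i<n. x\<^sub>i\<close>; positivity from a separating functional \<open>\<phi>\<close>, since
  \<open>|\<phi> x| \<le> C \<Sum>i<n. N x\<^sub>i\<close> for every decomposition. For symmetry let \<open>\<mu>(f) \<le> \<mu>(g)\<close>.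
  As \<open>g \<in> c\<^sub>0\<close>, matching the \<open>r\<close>-th largest entry of \<open>f\<close> with the \<open>r\<close>-th largest entry of \<open>g\<close>
  gives an injection \<open>\<pi>\<close> of the support of \<open>f\<close> with \<open>|f| \<le> |g \<circ> \<pi>|\<close>. A decomposition
  \<open>g = \<Sum>i. g\<^sub>i\<close> then pulls back to \<open>f = \<Sum>i. (f / g \<circ> \<pi>) \<cdot> (g\<^sub>i \<circ> \<pi>)\<close>, whose pieces satisfy
  \<open>\<mu>(f\<^sub>i) \<le> \<mu>(g\<^sub>i)\<close>, so the symmetry of \<open>N\<close> bounds the cost of the new decomposition by that of the old.
\<close>

lemma sum_apply: "(\<Sum>i\<in>A. f i) x = (\<Sum>i\<in>A. f i x)"
  by (induction A rule: infinite_finite_induct) auto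

lemma sum_lessThan_add:
  "(\<Sum>i<(n::nat) + m. (z i :: 'a::comm_monoid_add)) = (\<Sum>i<n. z i) + (\<Sum>i<m. z (n + i))"
  by (induction m) (auto simp: add.assoc)

section \<open>Ranks of the entries of a null sequence\<close>

text \<open>The strict total order in which a decreasing rearrangement lists the indices:
  by decreasing modulus, ties broken by index.\<close>
definition precedes :: "(nat \<Rightarrow> complex) \<Rightarrow> nat \<Rightarrow> nat \<Rightarrow> bool" where
  "precedes f j k \<longleftrightarrow> norm (f k) < norm (f j) \<or> (norm (f j) = norm (f k) \<and> j < k)"

definition rearr_rank :: "(nat \<Rightarrow> complex) \<Rightarrow> nat \<Rightarrow> nat" where
  "rearr_rank f k = card {j. precedes f j k}"

definition upper_level :: "(nat \<Rightarrow> complex) \<Rightarrow> real \<Rightarrow> nat set" where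
  "upper_level f s = {j. s \<le> norm (f j)}"

lemma precedes_trans: "precedes f a b \<Longrightarrow> precedes f b c \<Longrightarrow> precedes f a c"
  unfolding precedes_def by auto

lemma finite_upper_level:
  assumes "f \<longlonglongrightarrow> 0" and "0 < s"
  shows "finite (upper_level f s)"
proof -
  obtain n0 where "\<forall>n\<ge>n0. norm (f n) < s"
    using assms unfolding LIMSEQ_iff by fastforce
  then have "upper_level f s \<subseteq> {..<n0}"
    unfolding upper_level_def by (auto simp: not_less[symmetric])
  then show ?thesis
    using finite_subset by blast
qed

lemma finite_predecessors:
  assumes "f \<longlonglongrightarrow> 0" and "f k \<noteq> 0"
  shows "finite {j. precedes f j k}"
proof -
  have "{j. precedes f j k} \<subseteq> upper_level f (norm (f k))"
    unfolding precedes_def upper_level_def by auto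
  then show ?thesis
    by (rule finite_subset) (use finite_upper_level[OF assms(1)] assms(2) in simp)
qed

lemma rearr_rank_less:
  assumes "f \<longlonglongrightarrow> 0" and "f b \<noteq> 0" and "precedes f a b"
  shows "rearr_rank f a < rearr_rank f b"
proof -
  have "{j. precedes f j a} \<subset> {j. precedes f j b}"
    using assms(3) precedes_trans by (auto simp: precedes_def)
  then show ?thesis
    unfolding rearr_rank_def using psubset_card_mono finite_predecessors[OF assms(1,2)] by blast
qed

lemma inj_on_rearr_rank:
  assumes "f \<longlonglongrightarrow> 0"
  shows "inj_on (rearr_rank f) {k. f k \<noteq> 0}"
proof (rule inj_onI, rule ccontr)
  fix k k' assume "k \<in> {k. f k \<noteq> 0}" "k' \<in> {k. f k \<noteq> 0}" "rearr_rank f k = rearr_rank f k'" "k \<noteq> k'"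
  moreover have "precedes f k k' \<or> precedes f k' k"
    using \<open>k \<noteq> k'\<close> unfolding precedes_def by auto
  ultimately show False
    using rearr_rank_less[OF assms] by fastforce
qed

lemma rearr_rank_image_upper_level:
  assumes "f \<longlonglongrightarrow> 0" and "0 < s"
  shows "rearr_rank f ` upper_level f s = {..<card (upper_level f s)}"
proof -
  let ?U = "upper_level f s"
  have "inj_on (rearr_rank f) ?U"
    using assms(2) by (intro inj_on_subset[OF inj_on_rearr_rank[OF assms(1)]]) (auto simp: upper_level_def)
  then have card_eq: "card (rearr_rank f ` ?U) = card {..<card ?U}"
    by (simp add: card_image)
  have "rearr_rank f k < card ?U" if "k \<in> ?U" for k
  proof -
    have "{j. precedes f j k} \<subset> ?U"
      using that unfolding precedes_def upper_level_def by auto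
    then show ?thesis
      unfolding rearr_rank_def using psubset_card_mono finite_upper_level[OF assms] by blast
  qed
  then have "rearr_rank f ` ?U \<subseteq> {..<card ?U}"
    by auto
  then show ?thesis
    using card_subset_eq[OF _ _ card_eq] by simp
qed

section \<open>Comparing decreasing rearrangements\<close>

lemma ereal_le_decr_rearr:
  assumes "n < card (upper_level f s)"
  shows "ereal s \<le> decr_rearr f n"
  unfolding decr_rearr_def
proof (rule Inf_greatest, clarify)
  fix s' assume s': "finite {k. s' < norm (f k)}" "card {k. s' < norm (f k)} \<le> n"
  show "ereal s \<le> ereal s'"
  proof (rule ccontr)
    assume "\<not> ereal s \<le> ereal s'"
    then have "upper_level f s \<subseteq> {k. s' < norm (f k)}"
      unfolding upper_level_def by auto
    then have "card (upper_level f s) \<le> n"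
      using s' card_mono order_trans by blast
    with assms show False
      by simp
  qed
qed

lemma decr_rearr_card_upper_level_less:
  assumes "f \<longlonglongrightarrow> 0" and "0 < s"
  shows "decr_rearr f (card (upper_level f s)) < ereal s"
proof -
  \<comment> \<open>The finitely many moduli in \<open>(s/2, s)\<close> leave room for a level \<open>s' < s\<close> cutting out the same set.\<close>
  define V where "V = (\<lambda>j. norm (f j)) ` upper_level f (s / 2) \<inter> {..<s}"
  define s' where "s' = Max (insert (s / 2) V)"
  have "finite V"
    unfolding V_def using finite_upper_level[OF assms(1)] assms(2) by simp
  then have "s' < s"
    unfolding s'_def using assms(2) by (simp add: V_def)
  have "s / 2 \<le> s'"
    unfolding s'_def using \<open>finite V\<close> by (intro Max_ge) simp_all
  have level: "{k. s' < norm (f k)} \<subseteq> upper_level f s"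
  proof
    fix k assume "k \<in> {k. s' < norm (f k)}"
    then have k: "s' < norm (f k)"
      by simp
    show "k \<in> upper_level f s"
    proof (rule ccontr)
      assume "k \<notin> upper_level f s"
      with k \<open>s / 2 \<le> s'\<close> have "norm (f k) \<in> V"
        unfolding V_def upper_level_def by auto
      then have "norm (f k) \<le> s'"
        unfolding s'_def using \<open>finite V\<close> by simp
      with k show False
        by simp
    qed
  qed
  have "decr_rearr f (card (upper_level f s)) \<le> ereal s'"
    unfolding decr_rearr_def
    using level finite_upper_level[OF assms] \<open>s / 2 \<le> s'\<close> assms(2)
    by (intro Inf_lower) (auto intro: finite_subset card_mono)
  also have "\<dots> < ereal s"
    using \<open>s' < s\<close> by simp
  finally show ?thesis .
qed

lemma card_upper_level_mono:
  assumes "g \<longlonglongrightarrow> 0" and "0 < s" and "\<forall>n. decr_rearr f n \<le> decr_rearr g n"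
  shows "card (upper_level f s) \<le> card (upper_level g s)"
proof (rule ccontr)
  let ?n = "card (upper_level g s)"
  assume "\<not> ?thesis"
  then have "ereal s \<le> decr_rearr f ?n"
    by (intro ereal_le_decr_rearr) simp
  also have "\<dots> \<le> decr_rearr g ?n"
    using assms(3) by simp
  also have "\<dots> < ereal s"
    using decr_rearr_card_upper_level_less[OF assms(1,2)] .
  finally show False
    by simp
qed

lemma dominating_injection_exists:
  assumes "f \<longlonglongrightarrow> 0" and "g \<longlonglongrightarrow> 0" and "\<forall>n. decr_rearr f n \<le> decr_rearr g n"
  obtains \<pi> where "inj_on \<pi> {k. f k \<noteq> 0}" and "\<forall>k. f k \<noteq> 0 \<longrightarrow> norm (f k) \<le> norm (g (\<pi> k))"
proof
  define \<pi> where "\<pi> k = (SOME j. j \<in> upper_level g (norm (f k)) \<and> rearr_rank g j = rearr_rank f k)" for k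
  have \<pi>: "\<pi> k \<in> upper_level g (norm (f k)) \<and> rearr_rank g (\<pi> k) = rearr_rank f k" if "f k \<noteq> 0" for k
  proof -
    let ?s = "norm (f k)"
    have s: "0 < ?s"
      using that by simp
    have "rearr_rank f k \<in> rearr_rank f ` upper_level f ?s"
      by (simp add: upper_level_def)
    also have "\<dots> = {..<card (upper_level f ?s)}"
      by (rule rearr_rank_image_upper_level[OF assms(1) s])
    also have "\<dots> \<subseteq> {..<card (upper_level g ?s)}"
      using card_upper_level_mono[OF assms(2) s assms(3)] by auto
    also have "\<dots> = rearr_rank g ` upper_level g ?s"
      by (rule rearr_rank_image_upper_level[OF assms(2) s, symmetric])
    finally obtain j where "j \<in> upper_level g ?s \<and> rearr_rank g j = rearr_rank f k"
      by (metis imageE)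
    then show ?thesis
      unfolding \<pi>_def by (rule someI)
  qed
  show "inj_on \<pi> {k. f k \<noteq> 0}"
  proof (rule inj_onI)
    fix k k' assume k: "k \<in> {k. f k \<noteq> 0}" and k': "k' \<in> {k. f k \<noteq> 0}" and "\<pi> k = \<pi> k'"
    then have "rearr_rank f k = rearr_rank f k'"
      using \<pi>[of k] \<pi>[of k'] by simp
    with k k' show "k = k'"
      using inj_on_rearr_rank[OF assms(1)] by (simp add: inj_on_def)
  qed
  show "\<forall>k. f k \<noteq> 0 \<longrightarrow> norm (f k) \<le> norm (g (\<pi> k))"
    using \<pi> by (simp add: upper_level_def)
qed

lemma decr_rearr_le_by_injection:
  assumes inj: "inj_on \<pi> {k. h k \<noteq> 0}"
    and dom: "\<forall>k. h k \<noteq> 0 \<longrightarrow> norm (h k) \<le> norm (u (\<pi> k))"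
  shows "decr_rearr h n \<le> decr_rearr u n"
  unfolding decr_rearr_def
proof (rule Inf_superset_mono, clarify)
  fix s assume s: "0 \<le> s" "finite {k. s < norm (u k)}" "card {k. s < norm (u k)} \<le> n"
  let ?B = "{k. s < norm (h k)}"
  have "inj_on \<pi> ?B"
    using s(1) by (intro inj_on_subset[OF inj]) auto
  moreover have img: "\<pi> ` ?B \<subseteq> {k. s < norm (u k)}"
  proof (rule image_subsetI)
    fix k assume "k \<in> ?B"
    with s(1) dom show "\<pi> k \<in> {k. s < norm (u k)}"
      by (metis (mono_tags) mem_Collect_eq norm_zero order_le_less_trans not_less)
  qed
  ultimately have "finite ?B" and "card ?B \<le> n"
    using finite_imageD[OF finite_subset[OF img s(2)]] card_mono[OF s(2) img] s(3)
    by (auto simp: card_image)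
  then show "\<exists>s'. ereal s = ereal s' \<and> 0 \<le> s' \<and> finite {k. s' < norm (h k)}
                 \<and> card {k. s' < norm (h k)} \<le> n"
    using s(1) by blast
qed

text \<open>\<open>pullback f g \<pi> u\<close> is \<open>u \<circ> \<pi>\<close> rescaled by \<open>f / (g \<circ> \<pi>)\<close> on the support of \<open>f\<close>; it maps \<open>g\<close> to \<open>f\<close>.\<close>
definition pullback :: "(nat \<Rightarrow> complex) \<Rightarrow> (nat \<Rightarrow> complex) \<Rightarrow> (nat \<Rightarrow> nat)
    \<Rightarrow> (nat \<Rightarrow> complex) \<Rightarrow> nat \<Rightarrow> complex" where
  "pullback f g \<pi> u = (\<lambda>k. if f k = 0 then 0 else f k / g (\<pi> k) * u (\<pi> k))"

lemma sum_pullback: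
  assumes "\<forall>k. f k \<noteq> 0 \<longrightarrow> g (\<pi> k) \<noteq> 0" and "g = (\<Sum>i\<in>A. us i)"
  shows "f = (\<Sum>i\<in>A. pullback f g \<pi> (us i))"
proof
  fix k
  show "f k = (\<Sum>i\<in>A. pullback f g \<pi> (us i)) k"
  proof (cases "f k = 0")
    case False
    have "(\<Sum>i\<in>A. pullback f g \<pi> (us i)) k = f k / g (\<pi> k) * (\<Sum>i\<in>A. us i (\<pi> k))"
      using False by (simp add: pullback_def sum_apply sum_distrib_left)
    also have "\<dots> = f k"
      using False assms by (simp add: sum_apply)
    finally show ?thesis ..
  qed (simp add: pullback_def sum_apply)
qed

lemma decr_rearr_pullback_le:
  assumes "inj_on \<pi> {k. f k \<noteq> 0}" and "\<forall>k. f k \<noteq> 0 \<longrightarrow> norm (f k) \<le> norm (g (\<pi> k))"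
  shows "decr_rearr (pullback f g \<pi> u) n \<le> decr_rearr u n"
proof (rule decr_rearr_le_by_injection)
  show "inj_on \<pi> {k. pullback f g \<pi> u k \<noteq> 0}"
    using assms(1) by (rule inj_on_subset) (auto simp: pullback_def)
  show "\<forall>k. pullback f g \<pi> u k \<noteq> 0 \<longrightarrow> norm (pullback f g \<pi> u k) \<le> norm (u (\<pi> k))"
  proof (intro allI impI)
    fix k assume "pullback f g \<pi> u k \<noteq> 0"
    then have "f k \<noteq> 0"
      by (auto simp: pullback_def)
    with assms(2) have "norm (f k) / norm (g (\<pi> k)) \<le> 1"
      by (simp add: divide_le_eq)
    then have "norm (f k) / norm (g (\<pi> k)) * norm (u (\<pi> k)) \<le> norm (u (\<pi> k))"
      by (intro mult_left_le_one_le) auto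
    with \<open>f k \<noteq> 0\<close> show "norm (pullback f g \<pi> u k) \<le> norm (u (\<pi> k))"
      by (simp add: pullback_def norm_mult norm_divide)
  qed
qed

section \<open>The envelope norm\<close>

definition decomposition_costs :: "(nat \<Rightarrow> complex) set \<Rightarrow> ((nat \<Rightarrow> complex) \<Rightarrow> real)
    \<Rightarrow> (nat \<Rightarrow> complex) \<Rightarrow> real set" where
  "decomposition_costs E N x = {(\<Sum>i<n. N (xs i)) | n xs.
       (n::nat) \<ge> 1 \<and> (\<forall>i<n. xs i \<in> E) \<and> x = (\<Sum>i<n. xs i)}"

lemma envelope_norm_eq_Inf: "envelope_norm E N x = Inf (decomposition_costs E N x)"
  unfolding envelope_norm_def decomposition_costs_def ..

lemma decomposition_costsI:
  "(n::nat) \<ge> 1 \<Longrightarrow> \<forall>i<n. xs i \<in> E \<Longrightarrow> x = (\<Sum>i<n. xs i)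
    \<Longrightarrow> (\<Sum>i<n. N (xs i)) \<in> decomposition_costs E N x"
  unfolding decomposition_costs_def by blast

locale quasinormed_sequence_space =
  fixes E :: "(nat \<Rightarrow> complex) set" and N :: "(nat \<Rightarrow> complex) \<Rightarrow> real"
  assumes quasinorm: "is_quasinorm E N"
begin

lemma zero_mem: "0 \<in> E"
  and add_mem: "x \<in> E \<Longrightarrow> y \<in> E \<Longrightarrow> x + y \<in> E"
  and scale_mem: "x \<in> E \<Longrightarrow> (\<lambda>k. a * x k) \<in> E"
  and N_scale: "x \<in> E \<Longrightarrow> N (\<lambda>k. a * x k) = norm a * N x"
  and N_pos: "x \<in> E \<Longrightarrow> x \<noteq> 0 \<Longrightarrow> 0 < N x"
  using quasinorm unfolding is_quasinorm_def complex_subspace_def by auto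

lemma N_zero: "N 0 = 0"
  using N_scale[OF zero_mem, of 0] by (simp add: zero_fun_def)

lemma N_nonneg: "x \<in> E \<Longrightarrow> 0 \<le> N x"
  using N_pos N_zero by (cases "x = 0") (auto intro: less_imp_le)

lemma sum_mem: "\<forall>i<(n::nat). xs i \<in> E \<Longrightarrow> (\<Sum>i<n. xs i) \<in> E"
  by (induction n) (auto intro: zero_mem add_mem)

lemma decomposition_costs_nonneg: "t \<in> decomposition_costs E N x \<Longrightarrow> 0 \<le> t"
  unfolding decomposition_costs_def by (auto intro!: sum_nonneg N_nonneg)

lemma N_mem_decomposition_costs: "x \<in> E \<Longrightarrow> N x \<in> decomposition_costs E N x"
  using decomposition_costsI[of 1 "\<lambda>_. x" E x N] by simp

lemma decomposition_costs_add:
  assumes "t \<in> decomposition_costs E N x" and "t' \<in> decomposition_costs E N y"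
  shows "t + t' \<in> decomposition_costs E N (x + y)"
proof -
  obtain n :: nat and xs where x: "n \<ge> 1" "\<forall>i<n. xs i \<in> E" "x = (\<Sum>i<n. xs i)" "t = (\<Sum>i<n. N (xs i))"
    using assms(1) unfolding decomposition_costs_def by blast
  obtain m :: nat and ys where y: "\<forall>i<m. ys i \<in> E" "y = (\<Sum>i<m. ys i)" "t' = (\<Sum>i<m. N (ys i))"
    using assms(2) unfolding decomposition_costs_def by blast
  define zs where "zs i = (if i < n then xs i else ys (i - n))" for i
  have "x + y = (\<Sum>i<n + m. zs i)" and "t + t' = (\<Sum>i<n + m. N (zs i))"
    unfolding sum_lessThan_add x(3,4) y(2,3) by (simp_all add: zs_def)
  moreover have "\<forall>i<n + m. zs i \<in> E"
    using x(2) y(1) unfolding zs_def by auto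
  ultimately show ?thesis
    using decomposition_costsI[of "n + m" zs] x(1) by simp
qed

lemma decomposition_costs_scale:
  assumes "t \<in> decomposition_costs E N x"
  shows "norm a * t \<in> decomposition_costs E N (\<lambda>k. a * x k)"
proof -
  obtain n :: nat and xs where x: "n \<ge> 1" "\<forall>i<n. xs i \<in> E" "x = (\<Sum>i<n. xs i)" "t = (\<Sum>i<n. N (xs i))"
    using assms unfolding decomposition_costs_def by blast
  let ?ys = "\<lambda>i k. a * xs i k"
  have "(\<lambda>k. a * x k) = (\<Sum>i<n. ?ys i)"
    by (rule ext) (simp add: x(3) sum_apply sum_distrib_left)
  moreover have "norm a * t = (\<Sum>i<n. N (?ys i))"
    using x by (simp add: N_scale sum_distrib_left)
  ultimately show ?thesis
    using decomposition_costsI[of n ?ys E] x(1,2) scale_mem by simp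
qed

lemma envelope_norm_le: "t \<in> decomposition_costs E N x \<Longrightarrow> envelope_norm E N x \<le> t"
  unfolding envelope_norm_eq_Inf
  by (rule cInf_lower) (auto intro: bdd_belowI[of _ 0] decomposition_costs_nonneg)

lemma envelope_norm_greatest:
  "x \<in> E \<Longrightarrow> (\<And>t. t \<in> decomposition_costs E N x \<Longrightarrow> c \<le> t) \<Longrightarrow> c \<le> envelope_norm E N x"
  unfolding envelope_norm_eq_Inf by (rule cInf_greatest) (use N_mem_decomposition_costs in auto)

lemma envelope_norm_zero: "envelope_norm E N 0 = 0"
  using envelope_norm_le[OF N_mem_decomposition_costs[OF zero_mem]] N_zero
    envelope_norm_greatest[OF zero_mem decomposition_costs_nonneg]
  by simp

lemma envelope_norm_scale_le:
  assumes "x \<in> E"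
  shows "envelope_norm E N (\<lambda>k. a * x k) \<le> norm a * envelope_norm E N x"
proof (cases "a = 0")
  case True
  then show ?thesis
    using envelope_norm_zero by (simp add: zero_fun_def)
next
  case False
  have "envelope_norm E N (\<lambda>k. a * x k) / norm a \<le> envelope_norm E N x"
  proof (rule envelope_norm_greatest[OF assms])
    fix t assume "t \<in> decomposition_costs E N x"
    then have "envelope_norm E N (\<lambda>k. a * x k) \<le> norm a * t"
      by (intro envelope_norm_le decomposition_costs_scale)
    then show "envelope_norm E N (\<lambda>k. a * x k) / norm a \<le> t"
      using False by (simp add: divide_le_eq mult.commute)
  qed
  then show ?thesis
    using False by (simp add: divide_le_eq mult.commute)
qed

lemma envelope_norm_scale:
  assumes "x \<in> E"
  shows "envelope_norm E N (\<lambda>k. a * x k) = norm a * envelope_norm E N x"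
proof (cases "a = 0")
  case True
  then show ?thesis
    using envelope_norm_zero by (simp add: zero_fun_def)
next
  case False
  have "envelope_norm E N x = envelope_norm E N (\<lambda>k. inverse a * (a * x k))"
    using False by (simp flip: mult.assoc)
  also have "\<dots> \<le> norm (inverse a) * envelope_norm E N (\<lambda>k. a * x k)"
    using assms by (intro envelope_norm_scale_le scale_mem)
  finally have "norm a * envelope_norm E N x
      \<le> norm a * (norm (inverse a) * envelope_norm E N (\<lambda>k. a * x k))"
    by (simp add: mult_left_mono)
  also have "\<dots> = envelope_norm E N (\<lambda>k. a * x k)"
    using False by (simp add: norm_inverse)
  finally show ?thesis
    using envelope_norm_scale_le[OF assms, of a] by simp
qed

lemma envelope_norm_triangle:
  assumes "x \<in> E" and "y \<in> E"
  shows "envelope_norm E N (x + y) \<le> envelope_norm E N x + envelope_norm E N y"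
proof -
  have bound: "envelope_norm E N (x + y) - t' \<le> envelope_norm E N x"
    if "t' \<in> decomposition_costs E N y" for t'
  proof (rule envelope_norm_greatest[OF assms(1)])
    fix t assume "t \<in> decomposition_costs E N x"
    from envelope_norm_le[OF decomposition_costs_add[OF this that]]
    show "envelope_norm E N (x + y) - t' \<le> t"
      by simp
  qed
  have "envelope_norm E N (x + y) - envelope_norm E N x \<le> envelope_norm E N y"
  proof (rule envelope_norm_greatest[OF assms(2)])
    fix t' assume "t' \<in> decomposition_costs E N y"
    from bound[OF this] show "envelope_norm E N (x + y) - envelope_norm E N x \<le> t'"
      by simp
  qed
  then show ?thesis
    by simp
qed

lemma dual_functional_sum:
  assumes "dual_functional E N \<phi>" and "\<forall>i<(n::nat). xs i \<in> E"
  shows "\<phi> (\<Sum>i<n. xs i) = (\<Sum>i<n. \<phi> (xs i))"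
proof -
  have add: "\<And>x y. x \<in> E \<Longrightarrow> y \<in> E \<Longrightarrow> \<phi> (x + y) = \<phi> x + \<phi> y"
    using assms(1) unfolding dual_functional_def by blast
  have "\<phi> 0 = 0"
    using add[OF zero_mem zero_mem] by simp
  with assms(2) show ?thesis
    by (induction n) (auto simp: add sum_mem)
qed

lemma envelope_norm_pos:
  assumes "dual_separates E N" and "x \<in> E" and "x \<noteq> 0"
  shows "0 < envelope_norm E N x"
proof -
  obtain \<phi> where \<phi>: "dual_functional E N \<phi>" "\<phi> x \<noteq> 0"
    using assms unfolding dual_separates_def by blast
  obtain C where C: "\<forall>y\<in>E. norm (\<phi> y) \<le> C * N y"
    using \<phi>(1) unfolding dual_functional_def by blast
  have "0 < C"
  proof (rule ccontr)
    assume "\<not> 0 < C"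
    then have "C * N x \<le> 0"
      using N_nonneg[OF assms(2)] by (simp add: mult_nonpos_nonneg)
    then show False
      using C assms(2) \<phi>(2) by (metis norm_le_zero_iff order_trans)
  qed
  have "norm (\<phi> x) / C \<le> envelope_norm E N x"
  proof (rule envelope_norm_greatest[OF assms(2)])
    fix t assume "t \<in> decomposition_costs E N x"
    then obtain n :: nat and xs where x: "\<forall>i<n. xs i \<in> E" "x = (\<Sum>i<n. xs i)" "t = (\<Sum>i<n. N (xs i))"
      unfolding decomposition_costs_def by blast
    have "norm (\<phi> x) = norm (\<Sum>i<n. \<phi> (xs i))"
      using dual_functional_sum[OF \<phi>(1) x(1)] x(2) by simp
    also have "\<dots> \<le> (\<Sum>i<n. norm (\<phi> (xs i)))"
      by (rule norm_sum)
    also have "\<dots> \<le> (\<Sum>i<n. C * N (xs i))"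
      using C x(1) by (intro sum_mono) auto
    also have "\<dots> = C * t"
      using x(3) by (simp add: sum_distrib_left)
    finally show "norm (\<phi> x) / C \<le> t"
      using \<open>0 < C\<close> by (simp add: divide_le_eq mult.commute)
  qed
  moreover have "0 < norm (\<phi> x) / C"
    using \<phi>(2) \<open>0 < C\<close> by simp
  ultimately show ?thesis
    by linarith
qed

lemma envelope_norm_is_norm:
  assumes "dual_separates E N"
  shows "is_norm_on E (envelope_norm E N)"
  using quasinorm envelope_norm_pos[OF assms] envelope_norm_scale envelope_norm_triangle
  unfolding is_norm_on_def is_quasinorm_def by simp

lemma envelope_norm_symmetric:
  assumes sym: "is_symmetric E N" and c0: "\<forall>f\<in>E. f \<longlonglongrightarrow> 0"
  shows "is_symmetric E (envelope_norm E N)"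
  unfolding is_symmetric_def
proof (intro allI impI, elim conjE)
  fix f g assume g: "g \<in> E" and \<mu>: "\<forall>n. decr_rearr f n \<le> decr_rearr g n"
  have sym_N: "\<And>f g. g \<in> E \<Longrightarrow> \<forall>n. decr_rearr f n \<le> decr_rearr g n \<Longrightarrow> f \<in> E \<and> N f \<le> N g"
    using sym unfolding is_symmetric_def by blast
  have f: "f \<in> E"
    using sym_N[OF g \<mu>] by blast
  obtain \<pi> where \<pi>: "inj_on \<pi> {k. f k \<noteq> 0}" "\<forall>k. f k \<noteq> 0 \<longrightarrow> norm (f k) \<le> norm (g (\<pi> k))"
    using dominating_injection_exists c0 f g \<mu> by blast
  have "envelope_norm E N f \<le> envelope_norm E N g"
  proof (rule envelope_norm_greatest[OF g])
    fix t assume "t \<in> decomposition_costs E N g"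
    then obtain n :: nat and gs where gs: "n \<ge> 1" "\<forall>i<n. gs i \<in> E" "g = (\<Sum>i<n. gs i)" "t = (\<Sum>i<n. N (gs i))"
      unfolding decomposition_costs_def by blast
    let ?fs = "\<lambda>i. pullback f g \<pi> (gs i)"
    have fs: "?fs i \<in> E \<and> N (?fs i) \<le> N (gs i)" if "i < n" for i
      using that gs(2) decr_rearr_pullback_le[OF \<pi>] by (intro sym_N) auto
    have "f = (\<Sum>i<n. ?fs i)"
      using \<pi>(2) gs(3) by (intro sum_pullback) fastforce+
    with fs gs(1) have "envelope_norm E N f \<le> (\<Sum>i<n. N (?fs i))"
      by (intro envelope_norm_le decomposition_costsI) auto
    also have "\<dots> \<le> t"
      using fs gs(4) by (auto intro!: sum_mono)
    finally show "envelope_norm E N f \<le> t" .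
  qed
  with f show "f \<in> E \<and> envelope_norm E N f \<le> envelope_norm E N g"
    by blast
qed

end

theorem mainTheorem2:
  fixes E :: "(nat \<Rightarrow> complex) set" and N :: "(nat \<Rightarrow> complex) \<Rightarrow> real"
  assumes "is_quasinorm E N"
    and "is_symmetric E N"
    and "\<forall>f\<in>E. f \<longlonglongrightarrow> 0"
    and "dual_separates E N"
  shows "is_norm_on E (envelope_norm E N) \<and> is_symmetric E (envelope_norm E N)"
proof -
  interpret quasinormed_sequence_space E N
    using assms(1) by unfold_locales
  show ?thesis
    using envelope_norm_is_norm[OF assms(4)] envelope_norm_symmetric[OF assms(2,3)] by blast
qed

end
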